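(* Let $t\in[0,1)$, $\tilde r,\tilde c\in\tilde\Delta_n$ with strictly positive entries, and $\tilde P_\circ\in\mathbb{R}^{n\times n}_{\ge0}$. (a) If every row of $\tilde P_\circ$ is nonzero, the row projection $\min\{D_t(\tilde P\|\tilde P_\circ):\tilde P\in\mathbb{R}^{n\times n}_{\ge0},\ \tilde P^{1/t^*}\mathbf 1_n=\tilde r^{1/t^*}\}$ is attained at $$\tilde P=\mathrm{diag}(\tilde r/\tilde\mu)\,\tilde P_\circ,\qquad \tilde\mu=\big(\tilde P_\circ^{1/t^*}\mathbf 1_n\big)^{t^*}.$$ (b) If every column of $\tilde P_\circ$ is nonzero, the column projection $\min\{D_t(\tilde P\|\tilde P_\circ):\tilde P\in\mathbb{R}^{n\times n}_{\ge0},\ (\tilde P^{1/t^*})^\top\mathbf 1_n=\tilde c^{1/t^*}\}$ is attained at $$\tilde P=\tilde P_\circ\,\mathrm{diag}(\tilde c/\tilde\xi),\qquad \tilde\xi=\big((\tilde P_\circ^{1/t^*})^\top\mathbf 1_n\big)^{t^*}.$$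
   Context: $t^*=1/(2-t)$; all powers and the division $\tilde r/\tilde\mu$ are entrywise; $\mathbf 1_n$ is the all-ones vector. For $s\ne1$, $\log_s(z)=(z^{1-s}-1)/(1-s)$. Co-simplex $\tilde\Delta_n=\{\tilde p\in\mathbb{R}^n:\tilde p\ge0,\ \sum_i\tilde p_i^{1/t^*}=1\}$. Tempered relative entropy $D_t(\tilde u\|\tilde v)=\sum_k[\tilde u_k(\log_t\tilde u_k-\log_t\tilde v_k)-\log_{t-1}\tilde u_k+\log_{t-1}\tilde v_k]$ (sum over all entries). *)

theory Defs
  imports "HOL-Analysis.Analysis"
begin

definition tstar :: "real \<Rightarrow> real" where
  "tstar t = 1 / (2 - t)"

definition logt :: "real \<Rightarrow> real \<Rightarrow> real" where
  "logt s z = (z powr (1 - s) - 1) / (1 - s)"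

definition vpow :: "real^'n \<Rightarrow> real \<Rightarrow> real^'n" where
  "vpow v a = (\<chi> i. (v $ i) powr a)"

definition mpow :: "real^'n^'m \<Rightarrow> real \<Rightarrow> real^'n^'m" where
  "mpow P a = (\<chi> i j. (P $ i $ j) powr a)"

definition ones :: "real^'n" where
  "ones = (\<chi> i. 1)"

definition diagm :: "real^'n \<Rightarrow> real^'n^'n" where
  "diagm v = (\<chi> i j. if i = j then v $ i else 0)"

definition vdiv :: "real^'n \<Rightarrow> real^'n \<Rightarrow> real^'n" where
  "vdiv u v = (\<chi> i. u $ i / v $ i)"

definition nonneg_mat :: "real^'n^'m \<Rightarrow> bool" where
  "nonneg_mat P \<longleftrightarrow> (\<forall>i j. P $ i $ j \<ge> 0)"

definition cosimplex :: "real \<Rightarrow> (real^'n) set" where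
  "cosimplex t = {p. (\<forall>i. p $ i \<ge> 0) \<and> (\<Sum>i\<in>UNIV. (p $ i) powr (1 / tstar t)) = 1}"

definition Dt :: "real \<Rightarrow> real^'n^'m \<Rightarrow> real^'n^'m \<Rightarrow> real" where
  "Dt t U V = (\<Sum>i\<in>UNIV. \<Sum>j\<in>UNIV.
      U $ i $ j * (logt t (U $ i $ j) - logt t (V $ i $ j))
      - logt (t - 1) (U $ i $ j) + logt (t - 1) (V $ i $ j))"

end

theory Submission
  imports Defs
begin

text \<open>
  Put \<open>q = 2 - t > 1\<close>. Expanding the tempered logarithms splits \<open>D\<^sub>t(P \<parallel> P\<^sub>0)\<close> into
  row sums of \<open>P\<^sub>i\<^sub>j\<^sup>q\<close>, of the cross terms \<open>P\<^sub>i\<^sub>j P\<^sub>0\<^sub>i\<^sub>j\<^sup>q\<^sup>-\<^sup>1\<close> (with a negative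
  coefficient) and of \<open>P\<^sub>0\<^sub>i\<^sub>j\<^sup>q\<close>. The row constraint fixes the first and the last, so the
  projection maximises each cross term. By H\<ouml>lder's inequality with exponents \<open>q\<close> and
  \<open>q/(q-1)\<close> the cross term of row \<open>i\<close> is at most \<open>r\<^sub>i \<mu>\<^sub>i\<^sup>q\<^sup>-\<^sup>1\<close>, with equality for the row
  proportional to the \<open>i\<close>-th row of \<open>P\<^sub>0\<close>. The column case is the row case for the
  transposed matrices.
\<close>

lemma Holder_inequality_sum:
  fixes a b :: "'a \<Rightarrow> real"
  assumes "finite A" and pq: "p > 1" "q > 1" "1 / p + 1 / q = 1"
    and nonneg: "\<And>x. x \<in> A \<Longrightarrow> a x \<ge> 0" "\<And>x. x \<in> A \<Longrightarrow> b x \<ge> 0"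
  shows "(\<Sum>x\<in>A. a x * b x) \<le> (\<Sum>x\<in>A. a x powr p) powr (1 / p) * (\<Sum>x\<in>A. b x powr q) powr (1 / q)"
proof -
  define \<alpha> where "\<alpha> = (\<Sum>x\<in>A. a x powr p) powr (1 / p)"
  define \<beta> where "\<beta> = (\<Sum>x\<in>A. b x powr q) powr (1 / q)"
  have \<alpha>_pow: "\<alpha> powr p = (\<Sum>x\<in>A. a x powr p)" and \<beta>_pow: "\<beta> powr q = (\<Sum>x\<in>A. b x powr q)"
    using pq by (simp_all add: \<alpha>_def \<beta>_def powr_powr sum_nonneg)
  show ?thesis
  proof (cases "\<alpha> = 0 \<or> \<beta> = 0")
    case True
    then have "(\<forall>x\<in>A. a x = 0) \<or> (\<forall>x\<in>A. b x = 0)"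
      using \<alpha>_pow \<beta>_pow pq \<open>finite A\<close> nonneg by (auto simp: sum_nonneg_eq_0_iff)
    then show ?thesis
      using True by (auto simp: \<alpha>_def \<beta>_def)
  next
    case False
    then have pos: "\<alpha> > 0" "\<beta> > 0" by (auto simp: \<alpha>_def \<beta>_def)
    have "a x / \<alpha> * (b x / \<beta>) \<le> (a x / \<alpha>) powr p / p + (b x / \<beta>) powr q / q" if "x \<in> A" for x
      by (rule Youngs_inequality) (use pq nonneg that pos in auto)
    then have "(\<Sum>x\<in>A. a x / \<alpha> * (b x / \<beta>)) \<le> (\<Sum>x\<in>A. a x powr p / \<alpha> powr p / p + b x powr q / \<beta> powr q / q)"
      using nonneg pos by (intro sum_mono) (simp add: powr_divide)
    also have "\<dots> = 1"
      using pos pq by (simp add: sum.distrib flip: sum_divide_distrib \<alpha>_pow \<beta>_pow)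
    finally show ?thesis
      using pos by (simp add: \<alpha>_def[symmetric] \<beta>_def[symmetric] flip: sum_divide_distrib)
  qed
qed

lemma mult_powr_diff_one: "(x :: real) \<ge> 0 \<Longrightarrow> x * x powr (q - 1) = x powr q"
  by (cases "x = 0") (simp_all add: powr_mult_base)

lemma
  fixes v :: "'a \<Rightarrow> real"
  assumes "finite A" "q \<noteq> 0" and v: "\<And>x. x \<in> A \<Longrightarrow> v x \<ge> 0" and "\<rho> \<ge> 0"
    and m: "m = (\<Sum>x\<in>A. v x powr q) powr (1 / q)" "m > 0"
  shows sum_scaled_powr: "(\<Sum>x\<in>A. (\<rho> / m * v x) powr q) = \<rho> powr q"
    and sum_scaled_mult_powr: "(\<Sum>x\<in>A. \<rho> / m * v x * v x powr (q - 1)) = \<rho> * m powr (q - 1)"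
proof -
  have m_pow: "m powr q = (\<Sum>x\<in>A. v x powr q)"
    using assms by (simp add: powr_powr sum_nonneg)
  have "(\<Sum>x\<in>A. (\<rho> / m * v x) powr q) = (\<rho> / m) powr q * (\<Sum>x\<in>A. v x powr q)"
    using v \<open>\<rho> \<ge> 0\<close> \<open>m > 0\<close> by (simp add: sum_distrib_left powr_mult del: times_divide_eq_left)
  also have "\<dots> = \<rho> powr q"
    using \<open>\<rho> \<ge> 0\<close> \<open>m > 0\<close> by (simp add: powr_divide flip: m_pow)
  finally show "(\<Sum>x\<in>A. (\<rho> / m * v x) powr q) = \<rho> powr q" .
  have "(\<Sum>x\<in>A. \<rho> / m * v x * v x powr (q - 1)) = \<rho> / m * (\<Sum>x\<in>A. v x powr q)"
    using v by (simp add: sum_distrib_left mult.assoc mult_powr_diff_one)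
  also have "\<dots> = \<rho> * m powr (q - 1)"
    using \<open>m > 0\<close> by (simp add: powr_diff flip: m_pow)
  finally show "(\<Sum>x\<in>A. \<rho> / m * v x * v x powr (q - 1)) = \<rho> * m powr (q - 1)" .
qed

lemma sum_mult_powr_le:
  fixes v w :: "'a \<Rightarrow> real"
  assumes "finite A" "q > 1" and nonneg: "\<And>x. x \<in> A \<Longrightarrow> v x \<ge> 0" "\<And>x. x \<in> A \<Longrightarrow> w x \<ge> 0"
    and "\<rho> \<ge> 0" and w: "(\<Sum>x\<in>A. w x powr q) = \<rho> powr q"
  shows "(\<Sum>x\<in>A. w x * v x powr (q - 1)) \<le> \<rho> * ((\<Sum>x\<in>A. v x powr q) powr (1 / q)) powr (q - 1)"
proof -
  define p where "p = q / (q - 1)"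
  have p: "p > 1" "1 / q + 1 / p = 1"
    using \<open>q > 1\<close> by (auto simp: p_def field_simps)
  have "(\<Sum>x\<in>A. w x * v x powr (q - 1))
      \<le> (\<Sum>x\<in>A. w x powr q) powr (1 / q) * (\<Sum>x\<in>A. (v x powr (q - 1)) powr p) powr (1 / p)"
    by (rule Holder_inequality_sum) (use assms p in auto)
  also have "\<dots> = \<rho> * ((\<Sum>x\<in>A. v x powr q) powr (1 / q)) powr (q - 1)"
    using assms by (simp add: w powr_powr p_def)
  finally show ?thesis .
qed

lemma Dt_entry_eq:
  assumes "t < 1" "u \<ge> 0"
  shows "u * (logt t u - logt t v) - logt (t - 1) u + logt (t - 1) v
    = u powr (2 - t) / ((1 - t) * (2 - t)) - u * v powr (1 - t) / (1 - t) + v powr (2 - t) / (2 - t)"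
proof -
  define s where "s = 1 - t"
  have s: "s \<noteq> 0" "s + 1 \<noteq> 0" "s * (s + 1) \<noteq> 0" "1 - (t - 1) = s + 1" "2 - t = s + 1" "1 - t = s"
    using assms by (auto simp: s_def)
  have uu: "u powr (s + 1) = u * u powr s"
    using assms(2) by (cases "u = 0") (auto simp: powr_add)
  have "u * ((d - 1) / s - (c - 1) / s) - (u * d - 1) / (s + 1) + (b - 1) / (s + 1)
      = u * d / (s * (s + 1)) - u * c / s + b / (s + 1)" for d c b :: real
    using s(1-3) by (simp add: divide_simps) (simp add: algebra_simps)
  then show ?thesis
    unfolding logt_def s uu .
qed

lemma Dt_eq_sum_rows:
  fixes U V :: "real^'n^'m"
  assumes "t < 1" "nonneg_mat U"
  shows "Dt t U V = (\<Sum>i\<in>UNIV. (\<Sum>j\<in>UNIV. U$i$j powr (2 - t)) / ((1 - t) * (2 - t))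
      - (\<Sum>j\<in>UNIV. U$i$j * V$i$j powr (1 - t)) / (1 - t) + (\<Sum>j\<in>UNIV. V$i$j powr (2 - t)) / (2 - t))"
  unfolding Dt_def using assms
  by (simp add: Dt_entry_eq nonneg_mat_def sum.distrib sum_subtractf sum_divide_distrib)

lemma Dt_le_Dt_if_row_sums_eq:
  fixes U U' V :: "real^'n^'m"
  assumes "t < 1" "nonneg_mat U" "nonneg_mat U'"
    and "\<And>i. (\<Sum>j\<in>UNIV. U'$i$j powr (2 - t)) = (\<Sum>j\<in>UNIV. U$i$j powr (2 - t))"
    and "\<And>i. (\<Sum>j\<in>UNIV. U$i$j * V$i$j powr (1 - t)) \<le> (\<Sum>j\<in>UNIV. U'$i$j * V$i$j powr (1 - t))"
  shows "Dt t U' V \<le> Dt t U V"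
  unfolding Dt_eq_sum_rows[OF \<open>t < 1\<close> \<open>nonneg_mat U\<close>] Dt_eq_sum_rows[OF \<open>t < 1\<close> \<open>nonneg_mat U'\<close>]
  using assms by (intro sum_mono) (auto intro: divide_right_mono)

lemma diagm_mult_nth: "(diagm d ** A) $ i $ j = d $ i * A $ i $ j"
  by (simp add: diagm_def matrix_matrix_mult_def if_distrib[of "\<lambda>x. x * _"] cong: if_cong)

lemma mpow_mult_ones_nth: "(mpow P a *v ones) $ i = (\<Sum>j\<in>UNIV. P $ i $ j powr a)"
  by (simp add: mpow_def ones_def matrix_vector_mult_def)

lemma row_projection:
  fixes r :: "real^'n" and P0 :: "real^'m^'n"
  assumes t: "t < 1" and r: "\<And>i. r $ i \<ge> 0" and P0: "nonneg_mat P0"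
    and rows: "\<And>i. \<exists>j. P0 $ i $ j \<noteq> 0"
  defines "mu \<equiv> vpow (mpow P0 (1 / tstar t) *v ones) (tstar t)"
  defines "Ph \<equiv> diagm (vdiv r mu) ** P0"
  shows "nonneg_mat Ph" and "mpow Ph (1 / tstar t) *v ones = vpow r (1 / tstar t)"
    and "\<And>P. nonneg_mat P \<Longrightarrow> mpow P (1 / tstar t) *v ones = vpow r (1 / tstar t)
               \<Longrightarrow> Dt t Ph P0 \<le> Dt t P P0"
proof -
  define q where "q = 2 - t"
  have q: "q > 1" "1 / tstar t = q" "tstar t = 1 / q" "1 - t = q - 1"
    using t by (simp_all add: q_def tstar_def)
  have P0_nonneg: "P0 $ i $ j \<ge> 0" for i j
    using P0 by (simp add: nonneg_mat_def)
  have mu: "mu $ i = (\<Sum>j\<in>UNIV. P0 $ i $ j powr q) powr (1 / q)" for i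
    by (simp add: mu_def vpow_def mpow_mult_ones_nth q)
  have mu_pos: "mu $ i > 0" for i
  proof -
    obtain j where "P0 $ i $ j \<noteq> 0" using rows by blast
    then have "(\<Sum>j\<in>UNIV. P0 $ i $ j powr q) > 0"
      using P0_nonneg by (intro sum_pos2[where i = j]) auto
    then show ?thesis by (simp add: mu)
  qed
  have Ph: "Ph $ i $ j = r $ i / mu $ i * P0 $ i $ j" for i j
    by (simp add: Ph_def diagm_mult_nth vdiv_def)
  show Ph_nonneg: "nonneg_mat Ph"
    unfolding nonneg_mat_def Ph using r mu_pos P0_nonneg by (simp add: less_imp_le)
  have Ph_rows: "(\<Sum>j\<in>UNIV. Ph $ i $ j powr q) = r $ i powr q" for i
    unfolding Ph using q r P0_nonneg mu mu_pos by (intro sum_scaled_powr) auto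
  show "mpow Ph (1 / tstar t) *v ones = vpow r (1 / tstar t)"
    by (simp add: vec_eq_iff mpow_mult_ones_nth vpow_def q Ph_rows)
  fix P :: "real^'m^'n" assume P: "nonneg_mat P" "mpow P (1 / tstar t) *v ones = vpow r (1 / tstar t)"
  have P_rows: "(\<Sum>j\<in>UNIV. P $ i $ j powr q) = r $ i powr q" for i
    using P(2) by (simp add: vec_eq_iff mpow_mult_ones_nth vpow_def q)
  show "Dt t Ph P0 \<le> Dt t P P0"
  proof (rule Dt_le_Dt_if_row_sums_eq[OF t P(1) Ph_nonneg])
    show "(\<Sum>j\<in>UNIV. Ph $ i $ j powr (2 - t)) = (\<Sum>j\<in>UNIV. P $ i $ j powr (2 - t))" for i
      using Ph_rows P_rows by (simp add: q_def)
    have "(\<Sum>j\<in>UNIV. P $ i $ j * P0 $ i $ j powr (q - 1)) \<le> r $ i * mu $ i powr (q - 1)" for i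
      unfolding mu using q r P P0_nonneg P_rows
      by (intro sum_mult_powr_le) (auto simp: nonneg_mat_def)
    also have "r $ i * mu $ i powr (q - 1) = (\<Sum>j\<in>UNIV. Ph $ i $ j * P0 $ i $ j powr (q - 1))" for i
      unfolding Ph using q r P0_nonneg mu mu_pos by (intro sum_scaled_mult_powr[symmetric]) auto
    finally show "(\<Sum>j\<in>UNIV. P $ i $ j * P0 $ i $ j powr (1 - t)) \<le> (\<Sum>j\<in>UNIV. Ph $ i $ j * P0 $ i $ j powr (1 - t))" for i
      unfolding q .
  qed
qed

lemma transpose_mpow: "transpose (mpow P a) = mpow (transpose P) a"
  by (simp add: vec_eq_iff transpose_def mpow_def)

lemma transpose_diagm: "transpose (diagm d) = diagm d"
  by (simp add: vec_eq_iff transpose_def diagm_def)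

lemma nonneg_mat_transpose: "nonneg_mat (transpose P) = nonneg_mat P"
  by (auto simp: nonneg_mat_def transpose_def)

lemma Dt_transpose: "Dt t (transpose U) (transpose V) = Dt t U V"
  unfolding Dt_def transpose_def by (simp, rule sum.swap)

lemma column_projection:
  fixes c :: "real^'m" and P0 :: "real^'m^'n"
  assumes t: "t < 1" and c: "\<And>j. c $ j \<ge> 0" and P0: "nonneg_mat P0"
    and cols: "\<And>j. \<exists>i. P0 $ i $ j \<noteq> 0"
  defines "xi \<equiv> vpow (transpose (mpow P0 (1 / tstar t)) *v ones) (tstar t)"
  defines "Ph \<equiv> P0 ** diagm (vdiv c xi)"
  shows "nonneg_mat Ph" and "transpose (mpow Ph (1 / tstar t)) *v ones = vpow c (1 / tstar t)"
    and "\<And>P. nonneg_mat P \<Longrightarrow> transpose (mpow P (1 / tstar t)) *v ones = vpow c (1 / tstar t)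
               \<Longrightarrow> Dt t Ph P0 \<le> Dt t P P0"
proof -
  have P0T: "nonneg_mat (transpose P0)" "\<And>j. \<exists>i. transpose P0 $ j $ i \<noteq> 0"
    using P0 cols by (simp_all only: nonneg_mat_transpose) (simp add: transpose_def)
  have Ph: "Ph = transpose (diagm (vdiv c xi) ** transpose P0)"
    by (simp add: Ph_def matrix_transpose_mul transpose_diagm)
  have xi: "xi = vpow (mpow (transpose P0) (1 / tstar t) *v ones) (tstar t)"
    by (simp add: xi_def transpose_mpow)
  note rows = row_projection[OF t c P0T, folded xi]
  show "nonneg_mat Ph"
    using rows(1) by (simp add: Ph nonneg_mat_transpose)
  show "transpose (mpow Ph (1 / tstar t)) *v ones = vpow c (1 / tstar t)"
    using rows(2) by (simp add: Ph transpose_mpow)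
  fix P :: "real^'m^'n"
  assume "nonneg_mat P" "transpose (mpow P (1 / tstar t)) *v ones = vpow c (1 / tstar t)"
  then have "Dt t (transpose Ph) (transpose P0) \<le> Dt t (transpose P) (transpose P0)"
    unfolding Ph transpose_transpose by (intro rows(3)) (simp_all add: nonneg_mat_transpose transpose_mpow)
  then show "Dt t Ph P0 \<le> Dt t P P0"
    by (simp only: Dt_transpose)
qed

theorem theorem4:
  fixes t :: real and r c :: "real^'n" and P0 :: "real^'n^'n"
  assumes t: "0 \<le> t" "t < 1"
    and r: "r \<in> cosimplex t" "\<forall>i. r $ i > 0"
    and c: "c \<in> cosimplex t" "\<forall>i. c $ i > 0"
    and P0: "nonneg_mat P0"
  shows
   "((\<forall>i. \<exists>j. P0 $ i $ j \<noteq> 0) \<longrightarrow>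
      (let mu = vpow (mpow P0 (1 / tstar t) *v ones) (tstar t);
           Ph = diagm (vdiv r mu) ** P0
       in nonneg_mat Ph \<and> mpow Ph (1 / tstar t) *v ones = vpow r (1 / tstar t) \<and>
          (\<forall>P. nonneg_mat P \<and> mpow P (1 / tstar t) *v ones = vpow r (1 / tstar t)
               \<longrightarrow> Dt t Ph P0 \<le> Dt t P P0)))
    \<and>
    ((\<forall>j. \<exists>i. P0 $ i $ j \<noteq> 0) \<longrightarrow>
      (let xi = vpow (transpose (mpow P0 (1 / tstar t)) *v ones) (tstar t);
           Ph = P0 ** diagm (vdiv c xi)
       in nonneg_mat Ph \<and> transpose (mpow Ph (1 / tstar t)) *v ones = vpow c (1 / tstar t) \<and>
          (\<forall>P. nonneg_mat P \<and> transpose (mpow P (1 / tstar t)) *v ones = vpow c (1 / tstar t)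
               \<longrightarrow> Dt t Ph P0 \<le> Dt t P P0)))"
proof -
  have "r $ i \<ge> 0" "c $ i \<ge> 0" for i
    using r(2) c(2) by (simp_all add: less_imp_le)
  note rows = row_projection[OF t(2) this(1) P0] and cols = column_projection[OF t(2) this(2) P0]
  show ?thesis
    unfolding Let_def using rows cols by blast
qed

end
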